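(* For every $n\ge3$ there exists an instance of the general public project problem with $n$ players (i.e., a choice of $c>0$ and cost shares $c_1,\dots,c_n>0$ with $\sum_ic_i=c$) for which the BC mechanism dominates the VCG mechanism.
   Context: General public project problem: $n$ players, decisions $D=\{0,1\}$, $\Theta_i=[0,c]$ with $c>0$, $v_i(d,\theta_i)=d(\theta_i-c_i)$ where $c_i>0$ and $\sum_ic_i=c$; efficient decision $f(\theta)=1$ iff $\sum_i\theta_i\ge c$. Player $i$'s utility is $v_i(f(\theta),\theta_i)+t_i(\theta)$. The VCG (Clarke) mechanism: $t_i^{VCG}(\theta)=\sum_{j\ne i}v_j(f(\theta),\theta_j)-\max_{d\in D}\sum_{j\ne i}v_j(d,\theta_j)$. The BC (Bailey–Cavallo) mechanism: $t_i^{BC}(\theta)=t_i^{VCG}(\theta)-S_i(\theta_{-i})/n$ where $S_i(\theta_{-i})=\max_{\theta_i'\in[0,c]}\sum_{k=1}^n t_k^{VCG}(\theta_i',\theta_{-i})$. $t'$ dominates $t$ if $t_i(\theta)\le t'_i(\theta)$ for all $\theta,i$, strictly for some $\theta,i$. *)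

theory Defs
  imports Complex_Main
begin

text \<open>Players are 0,...,n-1; a type profile is theta :: nat => real (only entries < n matter).
  The decision d :: bool (True = build the project, i.e. d = 1).\<close>

definition valuation :: "real \<Rightarrow> bool \<Rightarrow> real \<Rightarrow> real" where
  "valuation ci d x = (if d then x - ci else 0)"

definition efficient :: "nat \<Rightarrow> real \<Rightarrow> (nat \<Rightarrow> real) \<Rightarrow> bool" where
  "efficient n c \<theta> = ((\<Sum>i<n. \<theta> i) \<ge> c)"

definition types :: "nat \<Rightarrow> real \<Rightarrow> (nat \<Rightarrow> real) set" where
  "types n c = {\<theta>. \<forall>i<n. \<theta> i \<in> {0..c}}"

definition others_val :: "nat \<Rightarrow> (nat \<Rightarrow> real) \<Rightarrow> bool \<Rightarrow> (nat \<Rightarrow> real) \<Rightarrow> nat \<Rightarrow> real" where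
  "others_val n cs d \<theta> i = (\<Sum>j\<in>{..<n} - {i}. valuation (cs j) d (\<theta> j))"

definition t_VCG :: "nat \<Rightarrow> real \<Rightarrow> (nat \<Rightarrow> real) \<Rightarrow> (nat \<Rightarrow> real) \<Rightarrow> nat \<Rightarrow> real" where
  "t_VCG n c cs \<theta> i =
     others_val n cs (efficient n c \<theta>) \<theta> i
     - Max ((\<lambda>d. others_val n cs d \<theta> i) ` UNIV)"

definition S_BC :: "nat \<Rightarrow> real \<Rightarrow> (nat \<Rightarrow> real) \<Rightarrow> (nat \<Rightarrow> real) \<Rightarrow> nat \<Rightarrow> real" where
  "S_BC n c cs \<theta> i = (SUP x\<in>{0..c}. \<Sum>k<n. t_VCG n c cs (\<theta>(i := x)) k)"

definition t_BC :: "nat \<Rightarrow> real \<Rightarrow> (nat \<Rightarrow> real) \<Rightarrow> (nat \<Rightarrow> real) \<Rightarrow> nat \<Rightarrow> real" where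
  "t_BC n c cs \<theta> i = t_VCG n c cs \<theta> i - S_BC n c cs \<theta> i / real n"

definition dominates :: "nat \<Rightarrow> real \<Rightarrow> ((nat \<Rightarrow> real) \<Rightarrow> nat \<Rightarrow> real)
    \<Rightarrow> ((nat \<Rightarrow> real) \<Rightarrow> nat \<Rightarrow> real) \<Rightarrow> bool" where
  "dominates n c t' t \<longleftrightarrow>
     (\<forall>\<theta>\<in>types n c. \<forall>i<n. t \<theta> i \<le> t' \<theta> i) \<and>
     (\<exists>\<theta>\<in>types n c. \<exists>i<n. t \<theta> i < t' \<theta> i)"

end

theory Submission
  imports Defs
begin

(* A Clarke (VCG) payment is never positive: a player pays
   min(V,0) when the project is built and -max(V,0) otherwise, V being the
   net value of the others.  Hence the Bailey-Cavallo rebate -S_i/n is never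
   negative, so BC weakly dominates VCG on every instance with c >= 0; it
   dominates strictly as soon as some rebate S_i(theta_-i) is negative, i.e.
   as soon as, whatever player i reports, the total VCG payment stays negative. *)

lemma t_VCG_closed_form:
  "t_VCG n c cs \<theta> i = (if efficient n c \<theta> then min (others_val n cs True \<theta> i) 0
                        else - max (others_val n cs True \<theta> i) 0)"
proof -
  have bool_univ: "(UNIV :: bool set) = {True, False}" by auto
  have "others_val n cs False \<theta> i = 0" by (simp add: others_val_def valuation_def)
  then show ?thesis unfolding t_VCG_def bool_univ by (auto simp: max_def min_def)
qed

lemma t_VCG_nonpos: "t_VCG n c cs \<theta> i \<le> 0"
  by (simp add: t_VCG_closed_form)

lemma others_val_build:
  assumes "i < n"
  shows "others_val n cs True \<theta> i = (\<Sum>j<n. \<theta> j - cs j) - (\<theta> i - cs i)"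
proof -
  have "(\<Sum>j<n. \<theta> j - cs j) = (\<theta> i - cs i) + (\<Sum>j\<in>{..<n} - {i}. \<theta> j - cs j)"
    using assms by (subst sum.remove[of _ i]) auto
  then show ?thesis by (simp add: others_val_def valuation_def)
qed

lemma S_BC_nonpos:
  assumes "c \<ge> 0"
  shows "S_BC n c cs \<theta> i \<le> 0"
  unfolding S_BC_def using assms
  by (intro cSUP_least) (auto intro: sum_nonpos t_VCG_nonpos)

lemma BC_dominates_VCG:
  assumes "c \<ge> 0" and "\<theta> \<in> types n c" and "i < n" and "S_BC n c cs \<theta> i < 0"
  shows "dominates n c (t_BC n c cs) (t_VCG n c cs)"
proof -
  have n_pos: "real n > 0" using \<open>i < n\<close> by simp
  have "t_VCG n c cs \<theta>' j \<le> t_BC n c cs \<theta>' j" for \<theta>' j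
    using S_BC_nonpos[OF \<open>c \<ge> 0\<close>] n_pos by (simp add: t_BC_def divide_nonpos_pos)
  moreover have "t_VCG n c cs \<theta> i < t_BC n c cs \<theta> i"
    using assms(4) n_pos by (simp add: t_BC_def divide_neg_pos)
  ultimately show ?thesis
    unfolding dominates_def using assms(2,3) by blast
qed

definition witness_costs :: "nat \<Rightarrow> real" where
  "witness_costs = (\<lambda>j. if j = 1 then 3 else 1)"

definition witness_total_cost :: "nat \<Rightarrow> real" where
  "witness_total_cost n = real n + 2"

definition witness_profile :: "nat \<Rightarrow> real" where
  "witness_profile = (\<lambda>j. if j = 1 then 0 else if j = 2 then 3 else 1)"

lemma sum_lessThan_split3:
  fixes f :: "nat \<Rightarrow> real"
  assumes "n \<ge> 3"
  shows "(\<Sum>j<n. f j) = f 0 + f 1 + f 2 + (\<Sum>j\<in>{3..<n}. f j)"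
proof -
  have "{..<n} = {0, 1, 2} \<union> {3..<n}" using assms by auto
  then show ?thesis by (simp add: sum.union_disjoint)
qed

lemma witness_costs_sum:
  assumes "n \<ge> 3"
  shows "(\<Sum>j<n. witness_costs j) = witness_total_cost n"
  using assms
  by (simp add: sum_lessThan_split3 witness_costs_def witness_total_cost_def)

lemma witness_profile_types: "witness_profile \<in> types n (witness_total_cost n)"
  by (auto simp: types_def witness_profile_def witness_total_cost_def)

text \<open>Whatever player 0 reports, the total VCG payment is at most -1:
  for reports x \<ge> 2 the project is built and player 0 pays the others'
  deficit 1; otherwise it is not built and player 1 pays the others'
  surplus x + 1.\<close>
lemma witness_total_payment:
  assumes "n \<ge> 3" and "x \<in> {0..witness_total_cost n}"
  shows "(\<Sum>k<n. t_VCG n (witness_total_cost n) witness_costs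
                   (witness_profile(0 := x)) k) \<le> -1"
proof -
  let ?\<theta> = "witness_profile(0 := x)"
  let ?t = "t_VCG n (witness_total_cost n) witness_costs ?\<theta>"
  have net_total: "(\<Sum>j<n. ?\<theta> j - witness_costs j) = x - 2"
    using assms(1) by (simp add: sum_lessThan_split3 witness_costs_def witness_profile_def)
  have built_iff: "efficient n (witness_total_cost n) ?\<theta> \<longleftrightarrow> x \<ge> 2"
    using assms(1)
    by (simp add: efficient_def sum_lessThan_split3 witness_profile_def witness_total_cost_def)
  have others_of_0: "others_val n witness_costs True ?\<theta> 0 = -1"
    using assms(1) by (simp only: others_val_build net_total) (simp add: witness_costs_def)
  have others_of_1: "others_val n witness_costs True ?\<theta> 1 = x + 1"
    using assms(1) by (simp only: others_val_build net_total)
      (simp add: witness_costs_def witness_profile_def)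
  have "(\<Sum>k<n. ?t k) = ?t 0 + ?t 1 + (?t 2 + (\<Sum>k\<in>{3..<n}. ?t k))"
    using assms(1) by (simp add: sum_lessThan_split3)
  also have "\<dots> \<le> ?t 0 + ?t 1"
    using t_VCG_nonpos sum_nonpos[of "{3..<n}" ?t] by (simp add: add_nonpos_nonpos)
  also have "\<dots> \<le> -1"
    using assms(2) others_of_1 t_VCG_nonpos[of n _ witness_costs ?\<theta> 0]
      t_VCG_nonpos[of n _ witness_costs ?\<theta> 1]
    by (cases "x \<ge> 2") (simp_all add: t_VCG_closed_form built_iff others_of_0)
  finally show ?thesis .
qed

lemma witness_S_BC_neg:
  assumes "n \<ge> 3"
  shows "S_BC n (witness_total_cost n) witness_costs witness_profile 0 < 0"
proof -
  have "S_BC n (witness_total_cost n) witness_costs witness_profile 0 \<le> -1"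
    unfolding S_BC_def using witness_total_payment[OF assms]
    by (intro cSUP_least) (auto simp: witness_total_cost_def)
  then show ?thesis by simp
qed

theorem theorem5:
  fixes n :: nat
  assumes "n \<ge> 3"
  shows "\<exists>c::real. \<exists>cs :: nat \<Rightarrow> real. c > 0 \<and> (\<forall>i<n. cs i > 0) \<and> (\<Sum>i<n. cs i) = c \<and>
           dominates n c (t_BC n c cs) (t_VCG n c cs)"
proof (intro exI conjI)
  show "witness_total_cost n > 0" by (simp add: witness_total_cost_def)
  show "\<forall>i<n. witness_costs i > 0" by (simp add: witness_costs_def)
  show "(\<Sum>i<n. witness_costs i) = witness_total_cost n"
    using assms by (rule witness_costs_sum)
  show "dominates n (witness_total_cost n) (t_BC n (witness_total_cost n) witness_costs)
          (t_VCG n (witness_total_cost n) witness_costs)"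
    using assms
    by (intro BC_dominates_VCG[OF _ witness_profile_types _ witness_S_BC_neg])
       (simp_all add: witness_total_cost_def)
qed

end
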